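(* Let $(\pi,T,\eta,\mu)$ be a symmetric random system (in particular $T$-invariant and time reversible). Then the Markov operator $P_{\eta,T}$ is self-adjoint on $L^2(X,\mu)$. In particular $P_{\eta,T^{-1}}=P_{\eta,T}$.
   Context: A measured fibration is a measurable map $\pi:\mathcal M\to X$ between Borel spaces together with a family $\eta=\{\eta_x\}_{x\in X}$ of probability measures on $\mathcal M$ with $\eta_x(\pi^{-1}(x))=1$ for every $x$, measurable in the sense that $x\mapsto\eta_x(f)=\int f\,d\eta_x$ is Borel for every Borel $f:\mathcal M\to[0,\infty]$. A random system $(\pi,T,\eta,\mu)$ consists of such a measured fibration, a measurable map $T:\mathcal M\to\mathcal M$, and a probability measure $\mu$ on $X$; $\mu\circ\eta$ is the probability measure on $\mathcal M$ with $(\mu\circ\eta)(f)=\int_X\eta_x(f)\,d\mu(x)$. The Markov operator is $(P_{\eta,T}f)(x)=\int_{\pi^{-1}(x)}f(\pi(T(\xi)))\,d\eta_x(\xi)$. The random system is $T$-invariant if $T$ is a measurable isomorphism and $\nu:=\mu\circ\eta$ satisfies $T_*\nu=\nu$. It is time reversible if there is a measurable isomorphism $\tilde J:\mathcal M\to\mathcal M$ mapping fibers of $\pi$ to fibers, with $\tilde J_*\nu=\nu$ and $T\circ\tilde J=\tilde J\circ T^{-1}$; $\tilde J$ induces $J:X\to X$ with $J\circ\pi=\pi\circ\tilde J$. An automorphism (symmetry) of the random system is a measurable isomorphism $\tilde S:\mathcal M\to\mathcal M$ with $T\circ\tilde S=\tilde S\circ T$, mapping fibers to fibers and with $\tilde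 S_*\nu=\nu$; it induces $S:X\to X$ with $S\circ\pi=\pi\circ\tilde S$. A $T$-invariant, time reversible random system with time-reversing map $\tilde J$ is called symmetric if there exists an automorphism $\tilde S$ whose induced map $S$ on $X$ coincides with the map $J$ induced by $\tilde J$. *)

theory Defs
  imports "HOL-Probability.Probability"
begin

text \<open>Measured fibration pi : M -> X with fiber measures eta.
  Borel spaces are modelled as measurable spaces in which singletons of X are measurable
  (so that fibers pi^-1(x) are measurable).\<close>
definition measured_fibration ::
  "'m measure \<Rightarrow> 'x measure \<Rightarrow> ('m \<Rightarrow> 'x) \<Rightarrow> ('x \<Rightarrow> 'm measure) \<Rightarrow> bool" where
  "measured_fibration Mm Xm \<pi> \<eta> \<longleftrightarrow>
     \<pi> \<in> measurable Mm Xm \<and>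
     (\<forall>x\<in>space Xm. {x} \<in> sets Xm) \<and>
     (\<forall>x\<in>space Xm. prob_space (\<eta> x) \<and> sets (\<eta> x) = sets Mm \<and>
                     emeasure (\<eta> x) (\<pi> -` {x} \<inter> space Mm) = 1) \<and>
     (\<forall>f :: 'm \<Rightarrow> ennreal. f \<in> borel_measurable Mm \<longrightarrow>
        (\<lambda>x. \<integral>\<^sup>+ \<xi>. f \<xi> \<partial>\<eta> x) \<in> borel_measurable Xm)"

definition random_system ::
  "'m measure \<Rightarrow> 'x measure \<Rightarrow> ('m \<Rightarrow> 'x) \<Rightarrow> ('m \<Rightarrow> 'm) \<Rightarrow> ('x \<Rightarrow> 'm measure) \<Rightarrow> 'x measure \<Rightarrow> bool" where
  "random_system Mm Xm \<pi> T \<eta> \<mu> \<longleftrightarrow>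
     measured_fibration Mm Xm \<pi> \<eta> \<and> T \<in> measurable Mm Mm \<and>
     prob_space \<mu> \<and> sets \<mu> = sets Xm"

definition comp_measure :: "'m measure \<Rightarrow> 'x measure \<Rightarrow> ('x \<Rightarrow> 'm measure) \<Rightarrow> 'm measure" where
  "comp_measure Mm \<mu> \<eta> = measure_of (space Mm) (sets Mm) (\<lambda>A. \<integral>\<^sup>+ x. emeasure (\<eta> x) A \<partial>\<mu>)"

definition markov_op :: "('x \<Rightarrow> 'm measure) \<Rightarrow> ('m \<Rightarrow> 'x) \<Rightarrow> ('m \<Rightarrow> 'm) \<Rightarrow> ('x \<Rightarrow> real) \<Rightarrow> 'x \<Rightarrow> real" where
  "markov_op \<eta> \<pi> T f x = (\<integral> \<xi>. f (\<pi> (T \<xi>)) \<partial>\<eta> x)"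

definition measurable_iso :: "'m measure \<Rightarrow> ('m \<Rightarrow> 'm) \<Rightarrow> bool" where
  "measurable_iso Mm f \<longleftrightarrow> f \<in> measurable Mm Mm \<and> bij_betw f (space Mm) (space Mm) \<and>
     the_inv_into (space Mm) f \<in> measurable Mm Mm"

definition induces :: "'m measure \<Rightarrow> ('m \<Rightarrow> 'x) \<Rightarrow> ('m \<Rightarrow> 'm) \<Rightarrow> ('x \<Rightarrow> 'x) \<Rightarrow> bool" where
  "induces Mm \<pi> St S \<longleftrightarrow> (\<forall>\<xi>\<in>space Mm. \<pi> (St \<xi>) = S (\<pi> \<xi>))"

definition T_invariant ::
  "'m measure \<Rightarrow> 'x measure \<Rightarrow> ('m \<Rightarrow> 'x) \<Rightarrow> ('m \<Rightarrow> 'm) \<Rightarrow> ('x \<Rightarrow> 'm measure) \<Rightarrow> 'x measure \<Rightarrow> bool" where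
  "T_invariant Mm Xm \<pi> T \<eta> \<mu> \<longleftrightarrow>
     random_system Mm Xm \<pi> T \<eta> \<mu> \<and> measurable_iso Mm T \<and>
     distr (comp_measure Mm \<mu> \<eta>) Mm T = comp_measure Mm \<mu> \<eta>"

definition time_reversing_map ::
  "'m measure \<Rightarrow> 'x measure \<Rightarrow> ('m \<Rightarrow> 'x) \<Rightarrow> ('m \<Rightarrow> 'm) \<Rightarrow> ('x \<Rightarrow> 'm measure) \<Rightarrow> 'x measure
   \<Rightarrow> ('m \<Rightarrow> 'm) \<Rightarrow> ('x \<Rightarrow> 'x) \<Rightarrow> bool" where
  "time_reversing_map Mm Xm \<pi> T \<eta> \<mu> Jt J \<longleftrightarrow>
     measurable_iso Mm Jt \<and> induces Mm \<pi> Jt J \<and>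
     distr (comp_measure Mm \<mu> \<eta>) Mm Jt = comp_measure Mm \<mu> \<eta> \<and>
     (\<forall>\<xi>\<in>space Mm. T (Jt \<xi>) = Jt (the_inv_into (space Mm) T \<xi>))"

definition automorphism ::
  "'m measure \<Rightarrow> 'x measure \<Rightarrow> ('m \<Rightarrow> 'x) \<Rightarrow> ('m \<Rightarrow> 'm) \<Rightarrow> ('x \<Rightarrow> 'm measure) \<Rightarrow> 'x measure
   \<Rightarrow> ('m \<Rightarrow> 'm) \<Rightarrow> ('x \<Rightarrow> 'x) \<Rightarrow> bool" where
  "automorphism Mm Xm \<pi> T \<eta> \<mu> St S \<longleftrightarrow>
     measurable_iso Mm St \<and> (\<forall>\<xi>\<in>space Mm. T (St \<xi>) = St (T \<xi>)) \<and> induces Mm \<pi> St S \<and>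
     distr (comp_measure Mm \<mu> \<eta>) Mm St = comp_measure Mm \<mu> \<eta>"

definition symmetric_random_system ::
  "'m measure \<Rightarrow> 'x measure \<Rightarrow> ('m \<Rightarrow> 'x) \<Rightarrow> ('m \<Rightarrow> 'm) \<Rightarrow> ('x \<Rightarrow> 'm measure) \<Rightarrow> 'x measure \<Rightarrow> bool" where
  "symmetric_random_system Mm Xm \<pi> T \<eta> \<mu> \<longleftrightarrow>
     T_invariant Mm Xm \<pi> T \<eta> \<mu> \<and>
     (\<exists>Jt J St S. time_reversing_map Mm Xm \<pi> T \<eta> \<mu> Jt J \<and>
                  automorphism Mm Xm \<pi> T \<eta> \<mu> St S \<and> (\<forall>x\<in>space Xm. S x = J x))"

end

theory Submission
  imports Defs
begin

text \<open>Write \<nu> = \<mu> \<circ> \<eta> for the measure on the total space; it is the Giry-monad bind \<mu> \<bind> \<eta>.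
  Disintegrating \<nu> along the kernel \<eta>, and using that \<eta> x lives on the fiber over x, gives
    \<integral> (P_R a) b d\<mu> = \<integral> a(\<pi>(R \<xi>)) b(\<pi> \<xi>) d\<nu>(\<xi>)
  for every measurable self-map R.  If R preserves \<nu> and R' is a left inverse of R, a change of
  variables then shows that P_R' is the adjoint of P_R.  For a symmetric system, invariance of \<nu>
  under T, the time reversal Jt and the automorphism St (which induce the same map on the base)
  shows that the pair (\<pi> \<xi>, \<pi>(T \<xi>)) is exchangeable under \<nu>, hence P_T is self-adjoint.
  Finally P_{T^{-1}} and P_T are both adjoint to P_T, so they have equal pairings with the sign
  of their difference, which forces them to agree almost everywhere.\<close>

section \<open>Integrals against a kernel\<close>

text \<open>For a sub-probability kernel K the library provides the disintegration formula
  nn_integral_bind for nonnegative functions and a Bochner version for bounded ones.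
  We need it for arbitrary real functions that are integrable with respect to M \<bind> K.\<close>

lemma kernel_integrable:
  fixes h :: "'b \<Rightarrow> real"
  assumes K[measurable]: "K \<in> M \<rightarrow>\<^sub>M subprob_algebra N"
    and h[measurable]: "h \<in> borel_measurable N"
    and int: "integrable (M \<bind> K) h"
  shows "AE x in M. integrable (K x) h" "integrable M (\<lambda>x. \<integral>y. h y \<partial>K x)"
proof -
  have norm_h: "(\<lambda>y. ennreal (norm (h y))) \<in> borel_measurable N" by measurable
  have fin: "(\<integral>\<^sup>+x. \<integral>\<^sup>+y. ennreal (norm (h y)) \<partial>K x \<partial>M) < \<infinity>"
    using int norm_h unfolding integrable_iff_bounded by (simp add: nn_integral_bind[OF _ K])
  have "AE x in M. (\<integral>\<^sup>+y. ennreal (norm (h y)) \<partial>K x) \<noteq> \<infinity>"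
  proof (rule nn_integral_PInf_AE)
    from norm_h show "(\<lambda>x. \<integral>\<^sup>+y. ennreal (norm (h y)) \<partial>K x) \<in> borel_measurable M"
      by (rule measurable_compose[OF K nn_integral_measurable_subprob_algebra])
  qed (use fin in simp)
  with AE_space show "AE x in M. integrable (K x) h"
  proof eventually_elim
    case (elim x)
    have "h \<in> borel_measurable (K x)"
      unfolding measurable_cong_sets[OF sets_kernel[OF K elim(1)] refl] by (rule h)
    with elim(2) show ?case unfolding integrable_iff_bounded by (simp add: less_top)
  qed
  have "(\<integral>\<^sup>+x. ennreal (norm (\<integral>y. h y \<partial>K x)) \<partial>M) \<le> (\<integral>\<^sup>+x. \<integral>\<^sup>+y. ennreal (norm (h y)) \<partial>K x \<partial>M)"
  proof (rule nn_integral_mono)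
    fix x show "ennreal (norm (\<integral>y. h y \<partial>K x)) \<le> (\<integral>\<^sup>+y. ennreal (norm (h y)) \<partial>K x)"
      using integral_norm_bound_ennreal[of "K x" h]
      by (cases "integrable (K x) h") (simp_all add: not_integrable_integral_eq)
  qed
  moreover have "(\<lambda>x. \<integral>y. h y \<partial>K x) \<in> borel_measurable M"
    by (rule measurable_compose[OF K integral_measurable_subprob_algebra[OF h]])
  ultimately show "integrable M (\<lambda>x. \<integral>y. h y \<partial>K x)"
    using fin unfolding integrable_iff_bounded by (blast intro: le_less_trans)
qed

lemma kernel_integral_nonneg:
  fixes h :: "'b \<Rightarrow> real"
  assumes K[measurable]: "K \<in> M \<rightarrow>\<^sub>M subprob_algebra N"
    and h[measurable]: "h \<in> borel_measurable N"
    and int: "integrable (M \<bind> K) h" and nonneg: "\<And>y. 0 \<le> h y" and ne: "space M \<noteq> {}"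
  shows "(\<integral>y. h y \<partial>(M \<bind> K)) = (\<integral>x. \<integral>y. h y \<partial>K x \<partial>M)"
proof -
  have h_bind: "h \<in> borel_measurable (M \<bind> K)"
    unfolding measurable_cong_sets[OF sets_bind_measurable[OF K ne] refl] by (rule h)
  have "(\<integral>y. h y \<partial>(M \<bind> K)) = enn2real (\<integral>\<^sup>+y. h y \<partial>(M \<bind> K))"
    using h_bind by (rule integral_eq_nn_integral) (simp add: nonneg)
  also have "\<dots> = enn2real (\<integral>\<^sup>+x. \<integral>\<^sup>+y. h y \<partial>K x \<partial>M)"
    by (simp add: nn_integral_bind[OF _ K])
  also have "(\<integral>\<^sup>+x. \<integral>\<^sup>+y. h y \<partial>K x \<partial>M) = (\<integral>\<^sup>+x. ennreal (\<integral>y. h y \<partial>K x) \<partial>M)"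
    using kernel_integrable(1)[OF K h int]
    by (intro nn_integral_cong_AE) (auto elim!: AE_mp intro!: nn_integral_eq_integral simp: nonneg)
  also have "enn2real \<dots> = (\<integral>x. \<integral>y. h y \<partial>K x \<partial>M)"
    by (rule integral_eq_nn_integral[symmetric])
      (rule measurable_compose[OF K integral_measurable_subprob_algebra[OF h]], simp add: nonneg)
  finally show ?thesis .
qed

lemma kernel_integral:
  fixes h :: "'b \<Rightarrow> real"
  assumes K[measurable]: "K \<in> M \<rightarrow>\<^sub>M subprob_algebra N"
    and h[measurable]: "h \<in> borel_measurable N"
    and int: "integrable (M \<bind> K) h" and ne: "space M \<noteq> {}"
  shows "(\<integral>y. h y \<partial>(M \<bind> K)) = (\<integral>x. \<integral>y. h y \<partial>K x \<partial>M)"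
proof -
  define hp where "hp y = max (h y) 0" for y
  define hn where "hn y = max (- h y) 0" for y
  have [measurable]: "hp \<in> borel_measurable N" "hn \<in> borel_measurable N"
    unfolding hp_def hn_def by measurable
  have split: "h y = hp y - hn y" for y
    unfolding hp_def hn_def by auto
  have parts_int: "integrable L hp" "integrable L hn" if "integrable L h" for L
    unfolding hp_def hn_def using that by auto
  note disint = kernel_integral_nonneg[OF K _ parts_int(1)[OF int] _ ne]
                kernel_integral_nonneg[OF K _ parts_int(2)[OF int] _ ne]
  have "(\<integral>y. h y \<partial>(M \<bind> K)) = (\<integral>y. hp y \<partial>(M \<bind> K)) - (\<integral>y. hn y \<partial>(M \<bind> K))"
    unfolding split using parts_int[OF int] by (rule Bochner_Integration.integral_diff)
  also have "\<dots> = (\<integral>x. \<integral>y. hp y \<partial>K x \<partial>M) - (\<integral>x. \<integral>y. hn y \<partial>K x \<partial>M)"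
    using disint by (simp add: hp_def hn_def)
  also have "\<dots> = (\<integral>x. (\<integral>y. hp y \<partial>K x) - (\<integral>y. hn y \<partial>K x) \<partial>M)"
    using kernel_integrable(2)[OF K _ parts_int(1)[OF int]] kernel_integrable(2)[OF K _ parts_int(2)[OF int]]
    by (intro Bochner_Integration.integral_diff[symmetric]) auto
  also have "\<dots> = (\<integral>x. \<integral>y. h y \<partial>K x \<partial>M)"
    using kernel_integrable(1)[OF K h int]
    by (intro integral_cong_AE) (auto elim!: AE_mp simp: split parts_int
          intro!: measurable_compose[OF K integral_measurable_subprob_algebra])
  finally show ?thesis .
qed

lemma integrable_product_of_squares:
  fixes f g :: "'a \<Rightarrow> real"
  assumes [measurable]: "f \<in> borel_measurable M" "g \<in> borel_measurable M"
    and "integrable M (\<lambda>x. (f x)\<^sup>2)" "integrable M (\<lambda>x. (g x)\<^sup>2)"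
  shows "integrable M (\<lambda>x. f x * g x)"
proof (rule Bochner_Integration.integrable_bound)
  show "integrable M (\<lambda>x. (f x)\<^sup>2 + (g x)\<^sup>2)" using assms by simp
  have "\<bar>f x * g x\<bar> \<le> (f x)\<^sup>2 + (g x)\<^sup>2" for x
  proof -
    have "\<bar>f x * g x\<bar> \<le> 2 * \<bar>f x\<bar> * \<bar>g x\<bar>" by (simp add: abs_mult)
    also have "\<dots> \<le> (f x)\<^sup>2 + (g x)\<^sup>2" using sum_squares_bound[of "\<bar>f x\<bar>" "\<bar>g x\<bar>"] by simp
    finally show ?thesis .
  qed
  then show "AE x in M. norm (f x * g x) \<le> norm ((f x)\<^sup>2 + (g x)\<^sup>2)" by simp
qed measurable

text \<open>Two integrable real functions agree almost everywhere as soon as they have the same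
  pairing with the sign of their difference: that pairing difference is the L^1 distance.\<close>

lemma AE_eq_if_sgn_pairing_eq:
  fixes P Q :: "'a \<Rightarrow> real"
  assumes P: "integrable M P" and Q: "integrable M Q"
    and eq: "(\<integral>x. P x * sgn (P x - Q x) \<partial>M) = (\<integral>x. Q x * sgn (P x - Q x) \<partial>M)"
  shows "AE x in M. P x = Q x"
proof -
  have times_sgn: "integrable M (\<lambda>x. F x * sgn (P x - Q x))" if F: "integrable M F" for F
  proof (rule Bochner_Integration.integrable_bound[OF F])
    show "(\<lambda>x. F x * sgn (P x - Q x)) \<in> borel_measurable M"
      using F P Q by measurable
    show "AE x in M. norm (F x * sgn (P x - Q x)) \<le> norm (F x)"
      by (simp add: abs_mult)
  qed
  have "(\<integral>x. \<bar>P x - Q x\<bar> \<partial>M) = (\<integral>x. P x * sgn (P x - Q x) - Q x * sgn (P x - Q x) \<partial>M)"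
    by (simp add: abs_sgn left_diff_distrib)
  also have "\<dots> = 0"
    using eq by (simp add: Bochner_Integration.integral_diff[OF times_sgn[OF P] times_sgn[OF Q]])
  finally have "AE x in M. \<bar>P x - Q x\<bar> = 0"
    using integral_nonneg_eq_0_iff_AE[of M "\<lambda>x. \<bar>P x - Q x\<bar>"] P Q by simp
  then show ?thesis by eventually_elim simp
qed

section \<open>A measured fibration with a base measure\<close>

locale fibred_measure =
  fixes Mm :: "'m measure" and Xm :: "'x measure" and \<pi> :: "'m \<Rightarrow> 'x"
    and \<eta> :: "'x \<Rightarrow> 'm measure" and \<mu> :: "'x measure"
  assumes fibration: "measured_fibration Mm Xm \<pi> \<eta>"
    and prob_space_base: "prob_space \<mu>" and sets_base: "sets \<mu> = sets Xm"
begin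

abbreviation \<nu> :: "'m measure" where "\<nu> \<equiv> \<mu> \<bind> \<eta>"

lemma projection_measurable[measurable]: "\<pi> \<in> Mm \<rightarrow>\<^sub>M \<mu>"
  using fibration unfolding measured_fibration_def measurable_cong_sets[OF refl sets_base] by simp

lemma space_base: "space \<mu> = space Xm"
  using sets_base by (rule sets_eq_imp_space_eq)

lemma fiber_measure:
  assumes "x \<in> space \<mu>"
  shows "prob_space (\<eta> x)" "sets (\<eta> x) = sets Mm" "emeasure (\<eta> x) (\<pi> -` {x} \<inter> space Mm) = 1"
  using fibration assms unfolding measured_fibration_def space_base by auto

lemma kernel_measurable[measurable]: "\<eta> \<in> \<mu> \<rightarrow>\<^sub>M subprob_algebra Mm"
proof (rule measurable_subprob_algebra)
  fix x assume "x \<in> space \<mu>"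
  then show "subprob_space (\<eta> x)" "sets (\<eta> x) = sets Mm"
    using fiber_measure by (auto intro: prob_space_imp_subprob_space)
next
  fix A assume A: "A \<in> sets Mm"
  have "(\<lambda>x. \<integral>\<^sup>+\<xi>. indicator A \<xi> \<partial>\<eta> x) \<in> borel_measurable Xm"
    using fibration A unfolding measured_fibration_def by simp
  then have "(\<lambda>x. \<integral>\<^sup>+\<xi>. indicator A \<xi> \<partial>\<eta> x) \<in> borel_measurable \<mu>"
    by (simp add: measurable_cong_sets[OF sets_base])
  moreover have "(\<integral>\<^sup>+\<xi>. indicator A \<xi> \<partial>\<eta> x) = emeasure (\<eta> x) A" if "x \<in> space \<mu>" for x
    using A fiber_measure(2)[OF that] by simp
  ultimately show "(\<lambda>x. emeasure (\<eta> x) A) \<in> borel_measurable \<mu>"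
    using measurable_cong[of \<mu> "\<lambda>x. \<integral>\<^sup>+\<xi>. indicator A \<xi> \<partial>\<eta> x"] by simp
qed

lemma sets_total: "sets \<nu> = sets Mm"
  using sets_bind_measurable[OF kernel_measurable] prob_space.not_empty[OF prob_space_base] .

lemma space_total: "space \<nu> = space Mm"
  using sets_total by (rule sets_eq_imp_space_eq)

lemma measurable_total: "measurable \<nu> N = measurable Mm N"
  by (rule measurable_cong_sets[OF sets_total refl])

lemma comp_measure_eq: "comp_measure Mm \<mu> \<eta> = \<nu>"
proof -
  have "comp_measure Mm \<mu> \<eta> = measure_of (space Mm) (sets Mm) (emeasure \<nu>)"
    unfolding comp_measure_def
    by (rule measure_of_eq[OF sets.space_closed])
      (simp add: emeasure_bind[OF prob_space.not_empty[OF prob_space_base] kernel_measurable]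
        sets.sigma_sets_eq)
  also have "\<dots> = \<nu>"
    using measure_of_of_measure[of \<nu>] sets_total space_total by simp
  finally show ?thesis .
qed

lemma fiber_AE:
  assumes x: "x \<in> space \<mu>"
  shows "AE \<xi> in \<eta> x. \<pi> \<xi> = x"
proof -
  interpret fiber: prob_space "\<eta> x" using fiber_measure(1)[OF x] .
  have "{x} \<in> sets \<mu>"
    using fibration x unfolding measured_fibration_def space_base sets_base by simp
  then have "\<pi> -` {x} \<inter> space Mm \<in> sets (\<eta> x)"
    using fiber_measure(2)[OF x] measurable_sets[OF projection_measurable] by simp
  then have "AE \<xi> in \<eta> x. \<xi> \<in> \<pi> -` {x} \<inter> space Mm"
    using fiber_measure(3)[OF x] by (subst fiber.AE_in_set_eq_1) (simp_all add: fiber.emeasure_eq_measure)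
  then show ?thesis by eventually_elim simp
qed

lemma distr_projection: "distr \<nu> \<mu> \<pi> = \<mu>"
proof (rule measure_eqI)
  fix A assume "A \<in> sets (distr \<nu> \<mu> \<pi>)"
  then have A: "A \<in> sets \<mu>" by simp
  have preA: "\<pi> -` A \<inter> space Mm \<in> sets Mm"
    using measurable_sets[OF projection_measurable A] .
  have fiberwise: "emeasure (\<eta> x) (\<pi> -` A \<inter> space Mm) = indicator A x" if x: "x \<in> space \<mu>" for x
  proof -
    interpret fiber: prob_space "\<eta> x" using fiber_measure(1)[OF x] .
    have space_fiber: "space (\<eta> x) = space Mm"
      using fiber_measure(2)[OF x] by (rule sets_eq_imp_space_eq)
    have "AE \<xi> in \<eta> x. indicator (\<pi> -` A \<inter> space Mm) \<xi> = (indicator A x :: ennreal)"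
      using AE_space fiber_AE[OF x] by eventually_elim (simp add: space_fiber split: split_indicator)
    then have "(\<integral>\<^sup>+\<xi>. indicator (\<pi> -` A \<inter> space Mm) \<xi> \<partial>\<eta> x) = (\<integral>\<^sup>+\<xi>. indicator A x \<partial>\<eta> x)"
      by (rule nn_integral_cong_AE)
    moreover have "\<pi> -` A \<inter> space Mm \<in> sets (\<eta> x)"
      using preA fiber_measure(2)[OF x] by simp
    ultimately show ?thesis
      by (simp add: fiber.emeasure_space_1)
  qed
  have "\<pi> \<in> \<nu> \<rightarrow>\<^sub>M \<mu>" unfolding measurable_total by (rule projection_measurable)
  then have "emeasure (distr \<nu> \<mu> \<pi>) A = emeasure \<nu> (\<pi> -` A \<inter> space Mm)"
    using A by (simp add: emeasure_distr space_total)
  also have "\<dots> = (\<integral>\<^sup>+x. emeasure (\<eta> x) (\<pi> -` A \<inter> space Mm) \<partial>\<mu>)"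
    using preA by (rule emeasure_bind[OF prob_space.not_empty[OF prob_space_base] kernel_measurable])
  also have "\<dots> = (\<integral>\<^sup>+x. indicator A x \<partial>\<mu>)"
    by (rule nn_integral_cong) (rule fiberwise)
  also have "\<dots> = emeasure \<mu> A"
    using A by simp
  finally show "emeasure (distr \<nu> \<mu> \<pi>) A = emeasure \<mu> A" .
qed simp

lemma integrable_lift:
  fixes a :: "'x \<Rightarrow> real"
  assumes "a \<in> borel_measurable \<mu>" "integrable \<mu> a"
  shows "integrable \<nu> (\<lambda>\<xi>. a (\<pi> \<xi>))"
  using integrable_distr_eq[of \<pi> \<nu> \<mu> a] assms distr_projection
  by (simp add: measurable_total)

definition preserves :: "('m \<Rightarrow> 'm) \<Rightarrow> bool" where
  "preserves R \<longleftrightarrow> R \<in> Mm \<rightarrow>\<^sub>M Mm \<and> distr \<nu> Mm R = \<nu>"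

lemma integral_preserves:
  fixes F :: "'m \<Rightarrow> real"
  assumes "preserves R" "F \<in> borel_measurable Mm"
  shows "(\<integral>\<xi>. F (R \<xi>) \<partial>\<nu>) = (\<integral>\<xi>. F \<xi> \<partial>\<nu>)"
  using integral_distr[of R \<nu> Mm F] assms unfolding preserves_def measurable_total by simp

lemma integrable_preserves:
  fixes F :: "'m \<Rightarrow> real"
  assumes "preserves R" "F \<in> borel_measurable Mm"
  shows "integrable \<nu> (\<lambda>\<xi>. F (R \<xi>)) \<longleftrightarrow> integrable \<nu> F"
  using integrable_distr_eq[of R \<nu> Mm F] assms unfolding preserves_def measurable_total by simp

lemma preserves_id: "preserves (\<lambda>\<xi>. \<xi>)"
  unfolding preserves_def by (simp add: distr_id2 sets_total)

lemma preserves_left_inverse: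
  assumes R: "preserves R" and R'[measurable]: "R' \<in> Mm \<rightarrow>\<^sub>M Mm"
    and inv: "\<And>\<xi>. \<xi> \<in> space Mm \<Longrightarrow> R' (R \<xi>) = \<xi>"
  shows "preserves R'"
proof -
  have R_meas[measurable]: "R \<in> \<nu> \<rightarrow>\<^sub>M Mm" and distr_R: "distr \<nu> Mm R = \<nu>"
    using R unfolding preserves_def measurable_total by auto
  have "distr \<nu> Mm R' = distr (distr \<nu> Mm R) Mm R'"
    by (simp add: distr_R)
  also have "\<dots> = distr \<nu> Mm (\<lambda>\<xi>. R' (R \<xi>))"
    using distr_distr[OF R' R_meas] by (simp add: comp_def)
  also have "\<dots> = distr \<nu> Mm (\<lambda>\<xi>. \<xi>)"
    by (rule distr_cong) (simp_all add: space_total inv)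
  also have "\<dots> = \<nu>"
    by (simp add: distr_id2 sets_total)
  finally show ?thesis using R' unfolding preserves_def by simp
qed

lemma square_integrable_lift:
  fixes a :: "'x \<Rightarrow> real"
  assumes R: "preserves R" and a[measurable]: "a \<in> borel_measurable \<mu>"
    and a2: "integrable \<mu> (\<lambda>x. (a x)\<^sup>2)"
  shows "integrable \<nu> (\<lambda>\<xi>. (a (\<pi> (R \<xi>)))\<^sup>2)"
proof -
  have "(\<lambda>\<xi>. (a (\<pi> \<xi>))\<^sup>2) \<in> borel_measurable Mm" by measurable
  from integrable_preserves[OF R this] integrable_lift[of "\<lambda>x. (a x)\<^sup>2"] a2 show ?thesis
    by simp
qed

lemma integrable_lift_product:
  fixes a b :: "'x \<Rightarrow> real"
  assumes R: "preserves R" and [measurable]: "a \<in> borel_measurable \<mu>" "b \<in> borel_measurable \<mu>"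
    and "integrable \<mu> (\<lambda>x. (a x)\<^sup>2)" "integrable \<mu> (\<lambda>x. (b x)\<^sup>2)"
  shows "integrable \<nu> (\<lambda>\<xi>. a (\<pi> (R \<xi>)) * b (\<pi> \<xi>))"
proof (rule integrable_product_of_squares)
  have [measurable]: "R \<in> Mm \<rightarrow>\<^sub>M Mm" using R unfolding preserves_def by simp
  show "(\<lambda>\<xi>. a (\<pi> (R \<xi>))) \<in> borel_measurable \<nu>" "(\<lambda>\<xi>. b (\<pi> \<xi>)) \<in> borel_measurable \<nu>"
    unfolding measurable_total by measurable
  show "integrable \<nu> (\<lambda>\<xi>. (a (\<pi> (R \<xi>)))\<^sup>2)" "integrable \<nu> (\<lambda>\<xi>. (b (\<pi> \<xi>))\<^sup>2)"
    using square_integrable_lift[OF R] square_integrable_lift[OF preserves_id] assms by simp_all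
qed

lemma markov_op_measurable:
  assumes [measurable]: "R \<in> Mm \<rightarrow>\<^sub>M Mm" "a \<in> borel_measurable \<mu>"
  shows "markov_op \<eta> \<pi> R a \<in> borel_measurable \<mu>"
  unfolding markov_op_def
  by (rule measurable_compose[OF kernel_measurable integral_measurable_subprob_algebra]) measurable

lemma markov_op_integrable:
  assumes [measurable]: "R \<in> Mm \<rightarrow>\<^sub>M Mm" "a \<in> borel_measurable \<mu>"
    and "integrable \<nu> (\<lambda>\<xi>. a (\<pi> (R \<xi>)))"
  shows "integrable \<mu> (markov_op \<eta> \<pi> R a)"
  unfolding markov_op_def using kernel_integrable(2)[OF kernel_measurable _ assms(3)] by simp

text \<open>The basic identity behind everything: pairing P_R a with b in L^2(\<mu>) is the integral of
  a(\<pi>(R \<xi>)) b(\<pi> \<xi>) against the total measure, because \<eta> x lives on the fiber over x.\<close>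

lemma markov_pairing:
  fixes a b :: "'x \<Rightarrow> real"
  assumes [measurable]: "R \<in> Mm \<rightarrow>\<^sub>M Mm" "a \<in> borel_measurable \<mu>" "b \<in> borel_measurable \<mu>"
    and int: "integrable \<nu> (\<lambda>\<xi>. a (\<pi> (R \<xi>)) * b (\<pi> \<xi>))"
  shows "(\<integral>x. markov_op \<eta> \<pi> R a x * b x \<partial>\<mu>) = (\<integral>\<xi>. a (\<pi> (R \<xi>)) * b (\<pi> \<xi>) \<partial>\<nu>)"
proof -
  have fiberwise: "(\<integral>\<xi>. a (\<pi> (R \<xi>)) * b (\<pi> \<xi>) \<partial>\<eta> x) = markov_op \<eta> \<pi> R a x * b x"
    if x: "x \<in> space \<mu>" for x
  proof -
    have "(\<integral>\<xi>. a (\<pi> (R \<xi>)) * b (\<pi> \<xi>) \<partial>\<eta> x) = (\<integral>\<xi>. a (\<pi> (R \<xi>)) * b x \<partial>\<eta> x)"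
    proof (rule integral_cong_AE)
      have "borel_measurable (\<eta> x) = (borel_measurable Mm :: ('m \<Rightarrow> real) set)"
        by (rule measurable_cong_sets[OF fiber_measure(2)[OF x] refl])
      then show "(\<lambda>\<xi>. a (\<pi> (R \<xi>)) * b (\<pi> \<xi>)) \<in> borel_measurable (\<eta> x)"
        "(\<lambda>\<xi>. a (\<pi> (R \<xi>)) * b x) \<in> borel_measurable (\<eta> x)"
        by simp_all
      show "AE \<xi> in \<eta> x. a (\<pi> (R \<xi>)) * b (\<pi> \<xi>) = a (\<pi> (R \<xi>)) * b x"
        using fiber_AE[OF x] by eventually_elim simp
    qed
    then show ?thesis by (simp add: markov_op_def)
  qed
  have "(\<integral>\<xi>. a (\<pi> (R \<xi>)) * b (\<pi> \<xi>) \<partial>\<nu>) = (\<integral>x. \<integral>\<xi>. a (\<pi> (R \<xi>)) * b (\<pi> \<xi>) \<partial>\<eta> x \<partial>\<mu>)"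
    by (rule kernel_integral[OF kernel_measurable _ int prob_space.not_empty[OF prob_space_base]])
      measurable
  also have "\<dots> = (\<integral>x. markov_op \<eta> \<pi> R a x * b x \<partial>\<mu>)"
    by (rule Bochner_Integration.integral_cong[OF refl fiberwise])
  finally show ?thesis ..
qed

lemma markov_adjoint_of_left_inverse:
  fixes a b :: "'x \<Rightarrow> real"
  assumes R: "preserves R" and R'[measurable]: "R' \<in> Mm \<rightarrow>\<^sub>M Mm"
    and inv: "\<And>\<xi>. \<xi> \<in> space Mm \<Longrightarrow> R' (R \<xi>) = \<xi>"
    and [measurable]: "a \<in> borel_measurable \<mu>" "b \<in> borel_measurable \<mu>"
    and a2: "integrable \<mu> (\<lambda>x. (a x)\<^sup>2)" and b2: "integrable \<mu> (\<lambda>x. (b x)\<^sup>2)"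
  shows "(\<integral>x. markov_op \<eta> \<pi> R' a x * b x \<partial>\<mu>) = (\<integral>x. a x * markov_op \<eta> \<pi> R b x \<partial>\<mu>)"
proof -
  have R'_pres: "preserves R'" by (rule preserves_left_inverse[OF R R' inv])
  have [measurable]: "R \<in> Mm \<rightarrow>\<^sub>M Mm" using R unfolding preserves_def by simp
  have "(\<integral>x. markov_op \<eta> \<pi> R' a x * b x \<partial>\<mu>) = (\<integral>\<xi>. a (\<pi> (R' \<xi>)) * b (\<pi> \<xi>) \<partial>\<nu>)"
    using integrable_lift_product[OF R'_pres _ _ a2 b2] by (intro markov_pairing) simp_all
  also have "\<dots> = (\<integral>\<xi>. a (\<pi> (R' (R \<xi>))) * b (\<pi> (R \<xi>)) \<partial>\<nu>)"
    by (rule integral_preserves[OF R, symmetric]) measurable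
  also have "\<dots> = (\<integral>\<xi>. b (\<pi> (R \<xi>)) * a (\<pi> \<xi>) \<partial>\<nu>)"
    by (rule Bochner_Integration.integral_cong) (simp_all add: space_total inv)
  also have "\<dots> = (\<integral>x. markov_op \<eta> \<pi> R b x * a x \<partial>\<mu>)"
    using integrable_lift_product[OF R _ _ b2 a2] by (intro markov_pairing[symmetric]) simp_all
  finally show ?thesis by (simp add: mult.commute)
qed

end

section \<open>Symmetric random systems\<close>

locale symmetric_system =
  fixes Mm :: "'m measure" and Xm :: "'x measure" and \<pi> :: "'m \<Rightarrow> 'x"
    and T :: "'m \<Rightarrow> 'm" and \<eta> :: "'x \<Rightarrow> 'm measure" and \<mu> :: "'x measure"
    and Jt :: "'m \<Rightarrow> 'm" and J :: "'x \<Rightarrow> 'x" and St :: "'m \<Rightarrow> 'm" and S :: "'x \<Rightarrow> 'x"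
  assumes invariant: "T_invariant Mm Xm \<pi> T \<eta> \<mu>"
    and reversal: "time_reversing_map Mm Xm \<pi> T \<eta> \<mu> Jt J"
    and automorphism: "automorphism Mm Xm \<pi> T \<eta> \<mu> St S"
    and symmetry: "\<forall>x\<in>space Xm. S x = J x"

sublocale symmetric_system \<subseteq> fibred_measure Mm Xm \<pi> \<eta> \<mu>
  using invariant unfolding T_invariant_def random_system_def fibred_measure_def by blast

context symmetric_system
begin

abbreviation Tinv :: "'m \<Rightarrow> 'm" where "Tinv \<equiv> the_inv_into (space Mm) T"

lemma T_preserves: "preserves T"
  using invariant comp_measure_eq
  unfolding T_invariant_def measurable_iso_def preserves_def by auto

lemma Jt_preserves: "preserves Jt"
  using reversal comp_measure_eq
  unfolding time_reversing_map_def measurable_iso_def preserves_def by auto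

lemma St_preserves: "preserves St"
  using automorphism comp_measure_eq
  unfolding automorphism_def measurable_iso_def preserves_def by auto

lemma T_measurable[measurable]: "T \<in> Mm \<rightarrow>\<^sub>M Mm"
  using T_preserves unfolding preserves_def by simp

lemma Tinv_measurable[measurable]: "Tinv \<in> Mm \<rightarrow>\<^sub>M Mm"
  using invariant unfolding T_invariant_def measurable_iso_def by auto

lemma Tinv_T: "\<xi> \<in> space Mm \<Longrightarrow> Tinv (T \<xi>) = \<xi>"
  using invariant unfolding T_invariant_def measurable_iso_def
  by (auto intro: the_inv_into_f_f bij_betw_imp_inj_on)

lemma Tinv_preserves: "preserves Tinv"
  by (rule preserves_left_inverse[OF T_preserves Tinv_measurable Tinv_T])

lemma Tinv_Jt:
  assumes \<xi>: "\<xi> \<in> space Mm"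
  shows "Tinv (Jt \<xi>) = Jt (T \<xi>)"
proof -
  have Jt_meas: "Jt \<in> Mm \<rightarrow>\<^sub>M Mm" using Jt_preserves unfolding preserves_def by simp
  have T\<xi>: "T \<xi> \<in> space Mm" using measurable_space[OF T_measurable \<xi>] .
  have "T (Jt (T \<xi>)) = Jt \<xi>"
    using reversal T\<xi> Tinv_T[OF \<xi>] unfolding time_reversing_map_def by auto
  then have "Tinv (Jt \<xi>) = Tinv (T (Jt (T \<xi>)))" by simp
  also have "\<dots> = Jt (T \<xi>)" using Tinv_T measurable_space[OF Jt_meas T\<xi>] by simp
  finally show ?thesis .
qed

text \<open>Invariance
  under T, Jt and St moves the pair (\<pi> \<xi>, \<pi>(T \<xi>)) to (J(\<pi>(T \<xi>)), J(\<pi> \<xi>)) and back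
  to (\<pi>(T \<xi>), \<pi> \<xi>), since St induces the same map S = J on the base.\<close>

lemma detailed_balance:
  fixes a b :: "'x \<Rightarrow> real"
  assumes [measurable]: "a \<in> borel_measurable \<mu>" "b \<in> borel_measurable \<mu>"
  shows "(\<integral>\<xi>. a (\<pi> (T \<xi>)) * b (\<pi> \<xi>) \<partial>\<nu>) = (\<integral>\<xi>. b (\<pi> (T \<xi>)) * a (\<pi> \<xi>) \<partial>\<nu>)"
proof -
  have on_base: "\<pi> \<xi> \<in> space Xm" if "\<xi> \<in> space Mm" for \<xi>
    using measurable_space[OF projection_measurable that] by (simp add: space_base)
  have T_space: "T \<xi> \<in> space Mm" if "\<xi> \<in> space Mm" for \<xi>
    using measurable_space[OF T_measurable that] .
  define G where "G \<xi> = a (\<pi> \<xi>) * b (\<pi> (Tinv \<xi>))" for \<xi>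
  define H where "H \<xi> = b (\<pi> (T \<xi>)) * a (\<pi> \<xi>)" for \<xi>
  have [measurable]: "G \<in> borel_measurable Mm" "H \<in> borel_measurable Mm"
    unfolding G_def H_def by measurable
  have "(\<integral>\<xi>. a (\<pi> (T \<xi>)) * b (\<pi> \<xi>) \<partial>\<nu>) = (\<integral>\<xi>. G (T \<xi>) \<partial>\<nu>)"
    by (rule Bochner_Integration.integral_cong) (simp_all add: G_def space_total Tinv_T)
  also have "\<dots> = (\<integral>\<xi>. G (Jt \<xi>) \<partial>\<nu>)"
    using integral_preserves[OF T_preserves, of G] integral_preserves[OF Jt_preserves, of G] by simp
  also have "\<dots> = (\<integral>\<xi>. H (St \<xi>) \<partial>\<nu>)"
  proof (rule Bochner_Integration.integral_cong)
    fix \<xi> assume "\<xi> \<in> space \<nu>"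
    then have \<xi>: "\<xi> \<in> space Mm" by (simp add: space_total)
    have "G (Jt \<xi>) = a (J (\<pi> \<xi>)) * b (J (\<pi> (T \<xi>)))"
      using reversal \<xi> T_space[OF \<xi>] Tinv_Jt[OF \<xi>]
      unfolding time_reversing_map_def induces_def G_def by auto
    also have "\<dots> = H (St \<xi>)"
      using automorphism symmetry \<xi> T_space[OF \<xi>] on_base
      unfolding automorphism_def induces_def H_def by auto
    finally show "G (Jt \<xi>) = H (St \<xi>)" .
  qed simp
  also have "\<dots> = (\<integral>\<xi>. b (\<pi> (T \<xi>)) * a (\<pi> \<xi>) \<partial>\<nu>)"
    using integral_preserves[OF St_preserves, of H] by (simp add: H_def)
  finally show ?thesis .
qed

lemma markov_self_adjoint:
  fixes f g :: "'x \<Rightarrow> real"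
  assumes [measurable]: "f \<in> borel_measurable \<mu>" "g \<in> borel_measurable \<mu>"
    and f2: "integrable \<mu> (\<lambda>x. (f x)\<^sup>2)" and g2: "integrable \<mu> (\<lambda>x. (g x)\<^sup>2)"
  shows "(\<integral>x. markov_op \<eta> \<pi> T f x * g x \<partial>\<mu>) = (\<integral>x. f x * markov_op \<eta> \<pi> T g x \<partial>\<mu>)"
proof -
  have "(\<integral>x. markov_op \<eta> \<pi> T f x * g x \<partial>\<mu>) = (\<integral>\<xi>. f (\<pi> (T \<xi>)) * g (\<pi> \<xi>) \<partial>\<nu>)"
    using integrable_lift_product[OF T_preserves _ _ f2 g2] by (intro markov_pairing) simp_all
  also have "\<dots> = (\<integral>\<xi>. g (\<pi> (T \<xi>)) * f (\<pi> \<xi>) \<partial>\<nu>)"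
    by (rule detailed_balance) simp_all
  also have "\<dots> = (\<integral>x. markov_op \<eta> \<pi> T g x * f x \<partial>\<mu>)"
    using integrable_lift_product[OF T_preserves _ _ g2 f2] by (intro markov_pairing[symmetric]) simp_all
  finally show ?thesis by (simp add: mult.commute)
qed

lemma markov_inverse_AE:
  fixes g :: "'x \<Rightarrow> real"
  assumes g[measurable]: "g \<in> borel_measurable \<mu>" and g2: "integrable \<mu> (\<lambda>x. (g x)\<^sup>2)"
  shows "AE x in \<mu>. markov_op \<eta> \<pi> Tinv g x = markov_op \<eta> \<pi> T g x"
proof (rule AE_eq_if_sgn_pairing_eq)
  interpret base: prob_space \<mu> by (rule prob_space_base)
  have g_lift: "integrable \<nu> (\<lambda>\<xi>. g (\<pi> \<xi>))"
    using integrable_lift[OF g base.square_integrable_imp_integrable[OF g g2]] .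
  have "(\<lambda>\<xi>. g (\<pi> \<xi>)) \<in> borel_measurable Mm" by measurable
  note lift_along = integrable_preserves[OF _ this, THEN iffD2, OF _ g_lift]
  show "integrable \<mu> (markov_op \<eta> \<pi> Tinv g)" "integrable \<mu> (markov_op \<eta> \<pi> T g)"
    by (intro markov_op_integrable lift_along Tinv_preserves T_preserves; simp)+
  define s where "s x = sgn (markov_op \<eta> \<pi> Tinv g x - markov_op \<eta> \<pi> T g x)" for x
  have s_meas: "s \<in> borel_measurable \<mu>"
    unfolding s_def using markov_op_measurable by measurable
  have s2: "integrable \<mu> (\<lambda>x. (s x)\<^sup>2)"
  proof (rule Bochner_Integration.integrable_bound[of _ "\<lambda>_. 1::real"])
    show "(\<lambda>x. (s x)\<^sup>2) \<in> borel_measurable \<mu>" using s_meas by measurable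
  qed (auto simp: s_def abs_sgn_eq power2_eq_square)
  have "(\<integral>x. markov_op \<eta> \<pi> Tinv g x * s x \<partial>\<mu>) = (\<integral>x. g x * markov_op \<eta> \<pi> T s x \<partial>\<mu>)"
    by (rule markov_adjoint_of_left_inverse[OF T_preserves Tinv_measurable Tinv_T g s_meas g2 s2])
  also have "\<dots> = (\<integral>x. markov_op \<eta> \<pi> T g x * s x \<partial>\<mu>)"
    by (rule markov_self_adjoint[symmetric, OF g s_meas g2 s2])
  finally show "(\<integral>x. markov_op \<eta> \<pi> Tinv g x * s x \<partial>\<mu>) = (\<integral>x. markov_op \<eta> \<pi> T g x * s x \<partial>\<mu>)" .
qed

end

theorem proposition2p4:
  fixes Mm :: "'m measure" and Xm :: "'x measure" and \<pi> :: "'m \<Rightarrow> 'x"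
    and T :: "'m \<Rightarrow> 'm" and \<eta> :: "'x \<Rightarrow> 'm measure" and \<mu> :: "'x measure"
  assumes "symmetric_random_system Mm Xm \<pi> T \<eta> \<mu>"
  shows "(\<forall>f g. f \<in> borel_measurable \<mu> \<longrightarrow> g \<in> borel_measurable \<mu> \<longrightarrow>
            integrable \<mu> (\<lambda>x. (f x)\<^sup>2) \<longrightarrow> integrable \<mu> (\<lambda>x. (g x)\<^sup>2) \<longrightarrow>
            (\<integral>x. markov_op \<eta> \<pi> T f x * g x \<partial>\<mu>) = (\<integral>x. f x * markov_op \<eta> \<pi> T g x \<partial>\<mu>))
       \<and> (\<forall>f. f \<in> borel_measurable \<mu> \<longrightarrow> integrable \<mu> (\<lambda>x. (f x)\<^sup>2) \<longrightarrow>
            (AE x in \<mu>. markov_op \<eta> \<pi> (the_inv_into (space Mm) T) f x = markov_op \<eta> \<pi> T f x))"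
proof -
  from assms obtain Jt J St S where "symmetric_system Mm Xm \<pi> T \<eta> \<mu> Jt J St S"
    unfolding symmetric_random_system_def symmetric_system_def by blast
  then interpret symmetric_system Mm Xm \<pi> T \<eta> \<mu> Jt J St S .
  show ?thesis using markov_self_adjoint markov_inverse_AE by blast
qed

end
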